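(* Let $n\geq2$, $\overline{r},M,\widetilde{\delta},L>0$, $0<\alpha<1$, $k>0$, $k\neq1$. Let $\Omega\subset\mathbb{R}^n$ be a bounded domain with $|\Omega|\leq M\overline{r}^{\,n}$ and $\partial\Omega$ of class $C^{1,\alpha}$ with constants $\overline{r},L$. Let $D$ be a bounded open set compactly contained in $\Omega$ such that $\Omega\setminus\overline{D}$ is connected, $\mathrm{dist}(D,\partial\Omega)\geq\widetilde\delta$, and $\partial D$ is of class $C^{1,\alpha}$ with constants $\overline{r},L$. Then for every $P\in\partial D$ there exists a continuous path $\gamma$ in $\Omega\setminus\overline{D}$ with one end-point at $P$ and the other on $\partial\Omega$, such that for every $z\in\gamma$ $$|z-P|\leq c\,\mathrm{dist}(z,D),$$ where $c>0$ depends only on $k,n,\overline{r},M,\widetilde\delta,L,\alpha$.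
   Context: $\partial U$ of class $C^{1,\alpha}$ with constants $\overline{r},L$ means: for every $P\in\partial U$ there is a rigid change of coordinates with $P=0$ and $U\cap B_{\overline{r}}(0)=\{x=(x',x_n)\in B_{\overline{r}}(0): x_n>\varphi(x')\}$, where $\varphi\in C^{1,\alpha}(B_{\overline{r}}(0))$, $B_{\overline{r}}(0)\subset\mathbb{R}^{n-1}$, $\varphi(0)=|\nabla\varphi(0)|=0$, $\|\varphi\|_{L^\infty}+\overline{r}\|\nabla\varphi\|_{L^\infty}+\overline{r}^{1+\alpha}|\nabla\varphi|_{\alpha}\leq L\overline{r}$ ($|\cdot|_\alpha$ the $\alpha$-Hölder seminorm). *)

theory Defs
  imports "HOL-Analysis.Analysis"
begin

text \<open>Local coordinates at P: y = R (x - P) with R an orthogonal transformation;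
  the distinguished ("n-th") direction is a basis vector e, the hyperplane
  {y. y \<bullet> e = 0} plays the role of R^{n-1}, x' = y - (y\<bullet>e) e and x_n = y \<bullet> e.
  The gradient of phi is g x' (a vector in the hyperplane).
  The sup-norms / Hoelder seminorm are expressed through bounds A, B, C.\<close>

definition C1alpha_boundary :: "real \<Rightarrow> real \<Rightarrow> real \<Rightarrow> 'a::euclidean_space set \<Rightarrow> bool" where
  "C1alpha_boundary \<alpha> r L U \<longleftrightarrow>
    (\<forall>P\<in>frontier U. \<exists>R e (\<phi>::'a \<Rightarrow> real) (g::'a \<Rightarrow> 'a) A B C.
       orthogonal_transformation R \<and> e \<in> Basis \<and>
       (let H = {y. y \<bullet> e = 0}; B' = H \<inter> ball 0 r in
         (\<lambda>x. R (x - P)) ` U \<inter> ball 0 r = {y \<in> ball 0 r. y \<bullet> e > \<phi> (y - (y \<bullet> e) *\<^sub>R e)} \<and>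
         (\<forall>x'\<in>B'. g x' \<in> H \<and> (\<phi> has_derivative (\<lambda>h. g x' \<bullet> h)) (at x' within H)) \<and>
         \<phi> 0 = 0 \<and> norm (g 0) = 0 \<and>
         (\<forall>x'\<in>B'. \<bar>\<phi> x'\<bar> \<le> A) \<and>
         (\<forall>x'\<in>B'. norm (g x') \<le> B) \<and>
         (\<forall>x'\<in>B'. \<forall>y'\<in>B'. norm (g x' - g y') \<le> C * norm (x' - y') powr \<alpha>) \<and>
         A + r * B + r powr (1 + \<alpha>) * C \<le> L * r))"

end

theory Submission
  imports Defs
begin

text \<open>
  Near each \<open>p \<in> \<partial>D\<close>, \<open>D\<close> lies
  above the graph of an \<open>L\<close>-Lipschitz function, seen from the inner normal \<open>\<nu>\<close> at \<open>p\<close>. So the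
  segment from \<open>P\<close> in direction \<open>-\<nu>\<close> stays in a cone outside \<open>D\<close>: its point at distance \<open>t\<close>
  from \<open>P\<close> has distance at least \<open>t / (1 + L)\<close> from \<open>D\<close>. The endpoint \<open>P\<^sub>1\<close> of the segment
  has distance \<open>\<epsilon>\<close> from \<open>D\<close>, where \<open>\<epsilon>\<close> is of order \<open>min r \<delta> / L\<^sup>2\<close>.

  From \<open>P\<^sub>1\<close> the path goes to \<open>\<partial>\<Omega>\<close> through points at distance at least \<open>\<epsilon> / (2 (1 + L))\<close>
  from \<open>D\<close>, where \<open>|z - P| \<le> diam \<Omega>\<close> is a bounded multiple of \<open>dist(z, D)\<close>. The diameter of
  \<open>\<Omega>\<close> is bounded by \<open>M\<close>, \<open>r\<close> and \<open>L\<close>: every point of the connected set \<open>\<Omega>\<close> is within \<open>r\<close> of a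
  ball of radius \<open>r / (2 (1 + L))\<close> inside \<open>\<Omega>\<close>, and \<open>|\<Omega>| \<le> M r\<^sup>n\<close>.

  Such a path exists because \<open>\<Omega> - closure D\<close> is connected. A point of it far from \<open>D\<close>
  represents itself, a point near \<open>p \<in> \<partial>D\<close> is represented by its push along the normal at
  \<open>p\<close>, and representatives of nearby points lie in one path-connected region below the graph of
  a single chart. Hence the points whose representatives can be joined to \<open>P\<^sub>1\<close> form an open
  and closed subset.
\<close>

lemma norm_diff_inner_scaleR_le:
  fixes v e :: "'a::real_inner"
  assumes "norm e = 1"
  shows "norm (v - (v \<bullet> e) *\<^sub>R e) \<le> norm v"
proof -
  have "e \<bullet> e = 1" using assms by (simp add: norm_eq_1)
  then have "(v - (v \<bullet> e) *\<^sub>R e) \<bullet> (v - (v \<bullet> e) *\<^sub>R e) = v \<bullet> v - (v \<bullet> e)\<^sup>2"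
    by (simp add: inner_diff_left inner_diff_right inner_commute power2_eq_square)
  then have "(norm (v - (v \<bullet> e) *\<^sub>R e))\<^sup>2 \<le> (norm v)\<^sup>2"
    by (simp add: power2_norm_eq_inner)
  then show ?thesis using power2_le_imp_le by fastforce
qed

lemma le_infdistI:
  assumes "A \<noteq> {}" and "\<And>a. a \<in> A \<Longrightarrow> m \<le> dist x a"
  shows "m \<le> infdist x A"
  unfolding infdist_notempty[OF assms(1)] by (rule cINF_greatest) (use assms in auto)

lemma infdist_pos_not_in_closure: "0 < infdist x A \<Longrightarrow> x \<notin> closure A"
  by (cases "A = {}") (auto simp: in_closure_iff_infdist_zero)

lemma path_to_frontier_of_open:
  fixes S :: "'a::real_normed_vector set"
  assumes "open S" and "path g" and "pathstart g \<in> S" and "pathfinish g \<notin> S"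
  obtains h where "path h" "pathstart h = pathstart g" "pathfinish h \<in> frontier S"
    "path_image h \<subseteq> path_image g" "\<And>t. 0 \<le> t \<Longrightarrow> t < 1 \<Longrightarrow> h t \<in> S"
proof -
  obtain u where u: "0 \<le> u" "u \<le> 1" "\<And>x. 0 \<le> x \<and> x < u \<Longrightarrow> g x \<in> interior S"
      "g u \<notin> interior S" "u = 0 \<or> g u \<in> closure S"
    using subpath_to_frontier_explicit[OF assms(2,4)] by blast
  have "u \<noteq> 0" using u(4) assms(1,3) by (auto simp: pathstart_def interior_open)
  show thesis
  proof
    show "path (subpath 0 u g)" using assms(2) u by simp
    show "pathstart (subpath 0 u g) = pathstart g" by (simp add: pathstart_def subpath_def)
    show "pathfinish (subpath 0 u g) \<in> frontier S" using u \<open>u \<noteq> 0\<close> by (simp add: frontier_def)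
    show "path_image (subpath 0 u g) \<subseteq> path_image g" using u by (simp add: path_image_subpath_subset)
  next
    fix t :: real assume "0 \<le> t" "t < 1"
    then have "0 \<le> u * t" "u * t < u" using u \<open>u \<noteq> 0\<close> by (auto simp: mult_less_cancel_left1)
    then show "subpath 0 u g t \<in> S" using u(3) assms(1) by (simp add: subpath_def interior_open)
  qed
qed

lemma joinpaths_in_open_interval:
  assumes "\<And>s. 0 < s \<Longrightarrow> s \<le> 1 \<Longrightarrow> g s \<in> S" and "\<And>s. 0 \<le> s \<Longrightarrow> s < 1 \<Longrightarrow> h s \<in> S"
    and "t \<in> {0<..<1}"
  shows "(g +++ h) t \<in> S"
  using assms by (auto simp: joinpaths_def)

lemma connected_imp_path_component_representatives:
  fixes S :: "'a::metric_space set"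
  assumes "connected S"
    and rep_ex: "\<And>w. w \<in> S \<Longrightarrow> \<exists>a. rep w a"
    and rep_local: "\<And>w. w \<in> S \<Longrightarrow> \<exists>e>0. \<forall>w'\<in>S. dist w w' < e \<longrightarrow>
        (\<forall>a a'. rep w a \<longrightarrow> rep w' a' \<longrightarrow> path_component E a a')"
    and "w \<in> S" "w' \<in> S" "rep w a" "rep w' a'"
  shows "path_component E a a'"
proof -
  define R where "R x y \<longleftrightarrow> (\<forall>a b. rep x a \<longrightarrow> rep y b \<longrightarrow> path_component E a b)" for x y
  have "R w w'"
  proof (rule connected_equivalence_relation[OF assms(1,4,5)])
    show "R y x" if "R x y" for x y
      using that unfolding R_def by (metis path_component_sym)
    show "R x z" if "R x y" "R y z" "y \<in> S" for x y z
    proof -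
      obtain b where "rep y b" using rep_ex \<open>y \<in> S\<close> by blast
      then show ?thesis using that unfolding R_def by (meson path_component_trans)
    qed
    show "\<exists>T. openin (top_of_set S) T \<and> x \<in> T \<and> (\<forall>y\<in>T. R x y)" if "x \<in> S" for x
    proof -
      obtain e where "e > 0" "\<forall>y\<in>S. dist x y < e \<longrightarrow> R x y"
        using rep_local[OF \<open>x \<in> S\<close>] by (auto simp: R_def)
      then show ?thesis
        using \<open>x \<in> S\<close> by (intro exI[of _ "S \<inter> ball x e"]) (auto simp: openin_open_Int)
    qed
  qed
  then show ?thesis using assms(6,7) by (simp add: R_def)
qed

section \<open>Lipschitz charts\<close>

text \<open>The local graph representation of \<open>C1alpha_boundary\<close> in coordinate-free form:
  \<open>\<Phi> x = \<phi> x'\<close> for the tangential part \<open>x'\<close> of \<open>R (x - p)\<close>.\<close>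

definition chart :: "real \<Rightarrow> real \<Rightarrow> 'a::euclidean_space set \<Rightarrow> 'a \<Rightarrow> 'a \<Rightarrow> ('a \<Rightarrow> real) \<Rightarrow> bool" where
  "chart r L U p \<nu> \<Phi> \<longleftrightarrow> norm \<nu> = 1 \<and> \<Phi> p = 0 \<and>
    (\<forall>x\<in>ball p r. x \<in> U \<longleftrightarrow> \<Phi> x < (x - p) \<bullet> \<nu>) \<and>
    (\<forall>x\<in>ball p r. \<forall>y\<in>ball p r. \<bar>\<Phi> x - \<Phi> y\<bar> \<le> L * dist x y) \<and>
    (\<forall>x t. \<Phi> (x + t *\<^sub>R \<nu>) = \<Phi> x)"

text \<open>The hypothesis \<open>DIM('a) \<ge> 2\<close> is needed only to see that the Hoelder constant \<open>C\<close> is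
  non-negative, so that \<open>A + r B + r powr (1 + \<alpha>) C \<le> L r\<close> bounds the gradient by \<open>L\<close>.\<close>

lemma C1alpha_boundary_lipschitz_graph:
  fixes U :: "'a::euclidean_space set"
  assumes "C1alpha_boundary \<alpha> r L U" and "p \<in> frontier U" and "DIM('a) \<ge> 2" and "0 < r"
  obtains R e and \<phi> :: "'a \<Rightarrow> real"
  where "orthogonal_transformation R" "e \<in> Basis" "0 \<le> L" "\<phi> 0 = 0"
    "(\<lambda>x. R (x - p)) ` U \<inter> ball 0 r = {y \<in> ball 0 r. \<phi> (y - (y \<bullet> e) *\<^sub>R e) < y \<bullet> e}"
    "\<And>a c. a \<in> {y. y \<bullet> e = 0} \<inter> ball 0 r \<Longrightarrow> c \<in> {y. y \<bullet> e = 0} \<inter> ball 0 r \<Longrightarrow>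
      \<bar>\<phi> a - \<phi> c\<bar> \<le> L * norm (a - c)"
proof -
  define H where "H e = {y::'a. y \<bullet> e = 0} \<inter> ball 0 r" for e
  obtain R e and \<phi> :: "'a \<Rightarrow> real" and g :: "'a \<Rightarrow> 'a" and A B C
    where R: "orthogonal_transformation R" and e: "e \<in> Basis"
      and "let H = {y. y \<bullet> e = 0}; B' = H \<inter> ball 0 r in
         (\<lambda>x. R (x - p)) ` U \<inter> ball 0 r = {y \<in> ball 0 r. y \<bullet> e > \<phi> (y - (y \<bullet> e) *\<^sub>R e)} \<and>
         (\<forall>x'\<in>B'. g x' \<in> H \<and> (\<phi> has_derivative (\<lambda>h. g x' \<bullet> h)) (at x' within H)) \<and>
         \<phi> 0 = 0 \<and> norm (g 0) = 0 \<and>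
         (\<forall>x'\<in>B'. \<bar>\<phi> x'\<bar> \<le> A) \<and>
         (\<forall>x'\<in>B'. norm (g x') \<le> B) \<and>
         (\<forall>x'\<in>B'. \<forall>y'\<in>B'. norm (g x' - g y') \<le> C * norm (x' - y') powr \<alpha>) \<and>
         A + r * B + r powr (1 + \<alpha>) * C \<le> L * r"
    using assms(1,2) unfolding C1alpha_boundary_def by blast
  then have graph: "(\<lambda>x. R (x - p)) ` U \<inter> ball 0 r = {y \<in> ball 0 r. \<phi> (y - (y \<bullet> e) *\<^sub>R e) < y \<bullet> e}"
      and der: "\<And>x'. x' \<in> H e \<Longrightarrow> (\<phi> has_derivative (\<lambda>h. g x' \<bullet> h)) (at x' within {y. y \<bullet> e = 0})"
      and \<phi>0: "\<phi> 0 = 0" and g0: "g 0 = 0"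
      and A: "\<And>x'. x' \<in> H e \<Longrightarrow> \<bar>\<phi> x'\<bar> \<le> A"
      and B: "\<And>x'. x' \<in> H e \<Longrightarrow> norm (g x') \<le> B"
      and C: "\<And>x' y'. x' \<in> H e \<Longrightarrow> y' \<in> H e \<Longrightarrow> norm (g x' - g y') \<le> C * norm (x' - y') powr \<alpha>"
      and ABC: "A + r * B + r powr (1 + \<alpha>) * C \<le> L * r"
    unfolding Let_def H_def by auto
  have H0: "0 \<in> H e" using \<open>0 < r\<close> by (simp add: H_def)
  obtain b :: 'a where b: "b \<in> Basis" "b \<noteq> e"
  proof -
    have "\<not> Basis \<subseteq> {e}" using assms(3) card_mono[of "{e}" "Basis :: 'a set"] by auto
    then show thesis using that by blast
  qed
  have "(r / 2) *\<^sub>R b \<in> H e" using b e \<open>0 < r\<close> by (simp add: H_def inner_not_same_Basis)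
  then have "norm (g 0 - g ((r / 2) *\<^sub>R b)) \<le> C * (r / 2) powr \<alpha>"
    using C[OF H0] b \<open>0 < r\<close> by fastforce
  then have "0 \<le> C * (r / 2) powr \<alpha>" by (rule order_trans[OF norm_ge_zero])
  then have "0 \<le> r powr (1 + \<alpha>) * C" using \<open>0 < r\<close> by (simp add: zero_le_mult_iff)
  moreover have "0 \<le> A" using A[OF H0] by (simp add: \<phi>0)
  ultimately have "r * B \<le> L * r" using ABC by linarith
  then have "B \<le> L" using \<open>0 < r\<close> by (simp add: mult.commute)
  have "0 \<le> B" using B[OF H0] by (simp add: g0)
  have "0 \<le> L" using \<open>0 \<le> B\<close> \<open>B \<le> L\<close> by linarith
  moreover have "\<bar>\<phi> a - \<phi> c\<bar> \<le> L * norm (a - c)"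
    if "a \<in> {y. y \<bullet> e = 0} \<inter> ball 0 r" "c \<in> {y. y \<bullet> e = 0} \<inter> ball 0 r" for a c
  proof -
    have "convex (H e)" unfolding H_def
      by (intro convex_Int convex_ball subspace_imp_convex[OF subspace_hyperplane2])
    then have "\<bar>\<phi> a - \<phi> c\<bar> \<le> B * norm (a - c)"
    proof (rule differentiable_bound[where f' = "\<lambda>x' h. g x' \<bullet> h", simplified])
      fix x assume "x \<in> H e"
      show "(\<phi> has_derivative (\<lambda>h. g x \<bullet> h)) (at x within H e)"
        using der[OF \<open>x \<in> H e\<close>] by (rule has_derivative_subset) (auto simp: H_def)
      show "onorm (\<lambda>h. g x \<bullet> h) \<le> B"
        using B[OF \<open>x \<in> H e\<close>] by (intro order_trans[OF onorm_bound]) (auto simp: Cauchy_Schwarz_ineq2)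
    qed (use that in \<open>auto simp: H_def\<close>)
    also have "\<dots> \<le> L * norm (a - c)" using \<open>B \<le> L\<close> by (simp add: mult_right_mono)
    finally show ?thesis .
  qed
  ultimately show thesis using that[OF R e _ \<phi>0 graph] by blast
qed

lemma lipschitz_graph_chart:
  fixes U :: "'a::euclidean_space set" and \<phi> :: "'a \<Rightarrow> real"
  assumes R: "orthogonal_transformation R" and e: "e \<in> Basis" and "0 \<le> L" and \<phi>0: "\<phi> 0 = 0"
    and graph: "(\<lambda>x. R (x - p)) ` U \<inter> ball 0 r = {y \<in> ball 0 r. \<phi> (y - (y \<bullet> e) *\<^sub>R e) < y \<bullet> e}"
    and lip: "\<And>a c. a \<in> {y. y \<bullet> e = 0} \<inter> ball 0 r \<Longrightarrow> c \<in> {y. y \<bullet> e = 0} \<inter> ball 0 r \<Longrightarrow>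
      \<bar>\<phi> a - \<phi> c\<bar> \<le> L * norm (a - c)"
  obtains \<nu> \<Phi> where "chart r L U p \<nu> \<Phi>"
proof -
  obtain \<nu> where \<nu>: "R \<nu> = e" using orthogonal_transformation_surj[OF R] by (metis surjD)
  define pr where "pr y = y - (y \<bullet> e) *\<^sub>R e" for y
  define \<Phi> where "\<Phi> x = \<phi> (pr (R (x - p)))" for x
  have "e \<bullet> e = 1" using e by simp
  have norm_R: "norm (R x) = norm x" for x using R by (simp add: orthogonal_transformation_norm)
  have norm_pr: "norm (pr y) \<le> norm y" for y
    unfolding pr_def using e by (simp add: norm_diff_inner_scaleR_le)
  have pr_H: "pr (R (x - p)) \<in> {y. y \<bullet> e = 0} \<inter> ball 0 r" if "x \<in> ball p r" for x
    using that norm_pr[of "R (x - p)"] norm_R[of "x - p"] \<open>e \<bullet> e = 1\<close>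
    by (simp add: pr_def inner_diff_left dist_norm norm_minus_commute)
  have "chart r L U p \<nu> \<Phi>"
    unfolding chart_def
  proof (intro conjI ballI allI)
    show "norm \<nu> = 1" using norm_R[of \<nu>] \<nu> e by simp
    show "\<Phi> p = 0" using R by (simp add: \<Phi>_def pr_def orthogonal_transformation_linear linear_0 \<phi>0)
  next
    fix x assume x: "x \<in> ball p r"
    have "R (x - p) \<in> ball 0 r" using x norm_R[of "x - p"] by (simp add: dist_norm norm_minus_commute)
    have "x \<in> U \<longleftrightarrow> R (x - p) \<in> (\<lambda>x. R (x - p)) ` U"
    proof
      assume "R (x - p) \<in> (\<lambda>x. R (x - p)) ` U"
      then obtain x' where "x' \<in> U" "R (x - p) = R (x' - p)" by auto
      then show "x \<in> U" using injD[OF orthogonal_transformation_inj[OF R]] by fastforce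
    qed simp
    also have "\<dots> \<longleftrightarrow> \<phi> (pr (R (x - p))) < R (x - p) \<bullet> e"
      using graph \<open>R (x - p) \<in> ball 0 r\<close> unfolding pr_def by blast
    also have "R (x - p) \<bullet> e = (x - p) \<bullet> \<nu>"
      using R \<nu> by (metis orthogonal_transformation_def)
    finally show "x \<in> U \<longleftrightarrow> \<Phi> x < (x - p) \<bullet> \<nu>" by (simp add: \<Phi>_def)
  next
    fix x y assume x: "x \<in> ball p r" and y: "y \<in> ball p r"
    have "R (x - y) = R (x - p) - R (y - p)"
      using linear_diff[OF orthogonal_transformation_linear[OF R], of "x - p" "y - p"] by simp
    moreover have "pr a - pr b = pr (a - b)" for a b by (simp add: pr_def algebra_simps)
    ultimately have "pr (R (x - p)) - pr (R (y - p)) = pr (R (x - y))" by simp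
    then have "norm (pr (R (x - p)) - pr (R (y - p))) \<le> dist x y"
      using norm_pr norm_R by (metis dist_norm)
    then have "L * norm (pr (R (x - p)) - pr (R (y - p))) \<le> L * dist x y"
      using \<open>0 \<le> L\<close> by (rule mult_left_mono)
    then show "\<bar>\<Phi> x - \<Phi> y\<bar> \<le> L * dist x y"
      using lip[OF pr_H[OF x] pr_H[OF y]] unfolding \<Phi>_def by linarith
  next
    fix x t
    have "x + t *\<^sub>R \<nu> - p = (x - p) + t *\<^sub>R \<nu>" by simp
    then have "R (x + t *\<^sub>R \<nu> - p) = R (x - p) + t *\<^sub>R e"
      using orthogonal_transformation_linear[OF R] \<nu> by (metis linear_add linear_scale)
    then show "\<Phi> (x + t *\<^sub>R \<nu>) = \<Phi> x"
      using \<open>e \<bullet> e = 1\<close> by (simp add: \<Phi>_def pr_def algebra_simps)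
  qed
  then show thesis by (rule that)
qed

lemma C1alpha_boundary_chart:
  fixes U :: "'a::euclidean_space set"
  assumes "C1alpha_boundary \<alpha> r L U" and "p \<in> frontier U" and "DIM('a) \<ge> 2" and "0 < r"
  obtains \<nu> \<Phi> where "chart r L U p \<nu> \<Phi>"
  by (rule C1alpha_boundary_lipschitz_graph[OF assms]) (rule lipschitz_graph_chart; assumption)

lemma chart_unit: "chart r L U p \<nu> \<Phi> \<Longrightarrow> \<nu> \<bullet> \<nu> = 1"
  by (simp add: chart_def norm_eq_1)

lemma chart_le_infdist:
  assumes ch: "chart r L U p \<nu> \<Phi>" and "0 \<le> L" and x: "x \<in> ball p r"
    and h: "(x - p) \<bullet> \<nu> + h \<le> \<Phi> x" and "U \<noteq> {}"
  shows "min (h / (1 + L)) (r - dist p x) \<le> infdist x U"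
proof (rule le_infdistI[OF \<open>U \<noteq> {}\<close>])
  fix u assume "u \<in> U"
  show "min (h / (1 + L)) (r - dist p x) \<le> dist x u"
  proof (cases "u \<in> ball p r")
    case False
    then show ?thesis using dist_triangle[of p u x] by (simp add: dist_commute)
  next
    case True
    from ch have "norm \<nu> = 1" and "\<Phi> u < (u - p) \<bullet> \<nu>"
      and "\<bar>\<Phi> u - \<Phi> x\<bar> \<le> L * dist x u"
      using True x \<open>u \<in> U\<close> unfolding chart_def by (auto simp: dist_commute)
    moreover have "(u - x) \<bullet> \<nu> \<le> norm (u - x) * norm \<nu>" by (rule norm_cauchy_schwarz)
    moreover have "(u - p) \<bullet> \<nu> = (u - x) \<bullet> \<nu> + (x - p) \<bullet> \<nu>" by (simp add: inner_diff_left)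
    ultimately have "h \<le> (1 + L) * dist x u"
      using h by (simp add: dist_norm norm_minus_commute algebra_simps)
    then have "h / (1 + L) \<le> dist x u" using \<open>0 \<le> L\<close> by (simp add: divide_le_eq mult.commute)
    then show ?thesis by linarith
  qed
qed

lemma chart_infdist_le:
  assumes ch: "chart r L U p \<nu> \<Phi>" and "0 \<le> L" and "x \<notin> U" and small: "(L + 2) * dist p x < r"
  shows "infdist x U \<le> \<Phi> x - (x - p) \<bullet> \<nu>"
proof (rule field_le_epsilon)
  fix \<tau> :: real assume "0 < \<tau>"
  define h where "h = \<Phi> x - (x - p) \<bullet> \<nu>"
  define s where "s = min \<tau> ((r - (L + 2) * dist p x) / 2)"
  define y where "y = x + (h + s) *\<^sub>R \<nu>"
  have "dist p x \<le> (L + 2) * dist p x" using \<open>0 \<le> L\<close> by (simp add: mult_le_cancel_right1)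
  then have "x \<in> ball p r" using small by simp
  then have "p \<in> ball p r" by (metis centre_in_ball mem_ball zero_le_dist le_less_trans)
  from ch have "norm \<nu> = 1" and "\<Phi> p = 0"
    and mem: "\<And>z. z \<in> ball p r \<Longrightarrow> z \<in> U \<longleftrightarrow> \<Phi> z < (z - p) \<bullet> \<nu>"
    and "\<Phi> y = \<Phi> x"
    by (auto simp: chart_def y_def)
  have lip: "\<bar>\<Phi> x - \<Phi> p\<bar> \<le> L * dist x p"
    using ch \<open>x \<in> ball p r\<close> \<open>p \<in> ball p r\<close> unfolding chart_def by blast
  have "0 \<le> h" using mem \<open>x \<in> ball p r\<close> \<open>x \<notin> U\<close> by (auto simp: h_def)
  have "\<bar>(x - p) \<bullet> \<nu>\<bar> \<le> dist p x"
    using Cauchy_Schwarz_ineq2[of "x - p" \<nu>] \<open>norm \<nu> = 1\<close> by (simp add: dist_norm norm_minus_commute)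
  then have "h \<le> (L + 1) * dist p x"
    using lip \<open>\<Phi> p = 0\<close> by (simp add: h_def dist_commute algebra_simps abs_le_iff)
  have "0 < s" "s \<le> \<tau>" using \<open>0 < \<tau>\<close> small by (auto simp: s_def)
  have "s \<le> (r - (L + 2) * dist p x) / 2" unfolding s_def by (rule min.cobounded2)
  have "dist x y = h + s" using \<open>norm \<nu> = 1\<close> \<open>0 \<le> h\<close> \<open>0 < s\<close> by (simp add: y_def dist_norm)
  moreover have "dist p y \<le> dist p x + dist x y" by (rule dist_triangle)
  ultimately have "y \<in> ball p r"
    using \<open>h \<le> (L + 1) * dist p x\<close> \<open>s \<le> (r - (L + 2) * dist p x) / 2\<close> small
    by (simp add: algebra_simps)
  moreover have "(y - p) \<bullet> \<nu> = (x - p) \<bullet> \<nu> + h + s"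
    using chart_unit[OF ch] by (simp add: y_def inner_diff_left inner_add_left)
  ultimately have "y \<in> U" using mem \<open>\<Phi> y = \<Phi> x\<close> \<open>0 < s\<close> by (simp add: h_def)
  then have "infdist x U \<le> h + s" using infdist_le \<open>dist x y = h + s\<close> by metis
  then show "infdist x U \<le> \<Phi> x - (x - p) \<bullet> \<nu> + \<tau>" using \<open>s \<le> \<tau>\<close> by (simp add: h_def)
qed

lemma chart_ball_subset:
  assumes ch: "chart r L U p \<nu> \<Phi>" and "0 \<le> L" and "0 < T" and "T + T / (1 + L) \<le> r"
  shows "ball (p + T *\<^sub>R \<nu>) (T / (1 + L)) \<subseteq> U"
proof
  fix z assume z: "z \<in> ball (p + T *\<^sub>R \<nu>) (T / (1 + L))"
  define c where "c = p + T *\<^sub>R \<nu>"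
  from ch have "norm \<nu> = 1" and "\<Phi> c = 0"
    and mem: "\<forall>x\<in>ball p r. x \<in> U \<longleftrightarrow> \<Phi> x < (x - p) \<bullet> \<nu>"
    and lip: "\<forall>x\<in>ball p r. \<forall>y\<in>ball p r. \<bar>\<Phi> x - \<Phi> y\<bar> \<le> L * dist x y"
    by (auto simp: chart_def c_def)
  have "dist c z < T / (1 + L)" using z by (simp add: c_def)
  moreover have "T / (1 + L) \<le> T" "0 < T / (1 + L)" using assms(2,3) by (auto simp: divide_le_eq)
  moreover have "dist p c = T" using \<open>norm \<nu> = 1\<close> \<open>0 < T\<close> by (simp add: c_def dist_norm)
  ultimately have "z \<in> ball p r" "c \<in> ball p r"
    using dist_triangle[of p z c] assms(4) by (auto simp: dist_commute)
  then have "\<Phi> z \<le> L * dist c z" using lip \<open>\<Phi> c = 0\<close> by (metis abs_le_D1 diff_zero dist_commute)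
  moreover have "(z - p) \<bullet> \<nu> = T + (z - c) \<bullet> \<nu>"
    using chart_unit[OF ch] by (simp add: c_def inner_diff_left inner_add_left)
  moreover have "- dist c z \<le> (z - c) \<bullet> \<nu>"
    using Cauchy_Schwarz_ineq2[of "z - c" \<nu>] \<open>norm \<nu> = 1\<close>
    by (simp add: dist_norm norm_minus_commute abs_le_iff)
  moreover have "(1 + L) * dist c z < T"
    using \<open>dist c z < T / (1 + L)\<close> \<open>0 \<le> L\<close> by (simp add: less_divide_eq mult.commute)
  ultimately show "z \<in> U" using mem \<open>z \<in> ball p r\<close> by (simp add: algebra_simps)
qed

text \<open>Two points below the graph of a chart are joined by moving along \<open>\<nu>\<close> down to a common
  level \<open>(z - p) \<bullet> \<nu> = -m\<close> and then across that level.\<close>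

definition drop_to_level :: "'a::real_inner \<Rightarrow> 'a \<Rightarrow> real \<Rightarrow> 'a \<Rightarrow> 'a" where
  "drop_to_level p \<nu> m x = x - ((x - p) \<bullet> \<nu> + m) *\<^sub>R \<nu>"

lemma chart_segment_down:
  assumes ch: "chart r L U p \<nu> \<Phi>" and "0 \<le> L" and "0 \<le> R" and "0 \<le> h"
    and x: "dist p x \<le> R" "h \<le> \<Phi> x - (x - p) \<bullet> \<nu>"
  shows "closed_segment x (drop_to_level p \<nu> ((1 + L) * R + h) x)
    \<subseteq> {z. dist p z \<le> (3 + L) * R + h \<and> h \<le> \<Phi> z - (z - p) \<bullet> \<nu>}"
proof
  define t where "t = (x - p) \<bullet> \<nu> + (1 + L) * R + h"
  have "norm \<nu> = 1" using ch by (simp add: chart_def)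
  have "\<bar>(x - p) \<bullet> \<nu>\<bar> \<le> dist p x"
    using Cauchy_Schwarz_ineq2[of "x - p" \<nu>] \<open>norm \<nu> = 1\<close> by (simp add: dist_norm norm_minus_commute)
  moreover have "0 \<le> L * R" using \<open>0 \<le> L\<close> \<open>0 \<le> R\<close> by simp
  ultimately have "0 \<le> t" "t \<le> (2 + L) * R + h"
    using x \<open>0 \<le> h\<close> by (auto simp: t_def abs_le_iff algebra_simps)
  fix z assume "z \<in> closed_segment x (drop_to_level p \<nu> ((1 + L) * R + h) x)"
  then obtain u where u: "0 \<le> u" "u \<le> 1" and z: "z = x - (u * t) *\<^sub>R \<nu>"
    by (auto simp: closed_segment_def drop_to_level_def t_def algebra_simps)
  have "0 \<le> u * t" "u * t \<le> t" using u \<open>0 \<le> t\<close> by (auto simp: mult_left_le_one_le)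
  have "dist p z \<le> dist p x + dist x z" by (rule dist_triangle)
  also have "dist x z = u * t" using \<open>norm \<nu> = 1\<close> \<open>0 \<le> u * t\<close> by (simp add: z dist_norm)
  finally have "dist p z \<le> (3 + L) * R + h"
    using x \<open>u * t \<le> t\<close> \<open>t \<le> (2 + L) * R + h\<close> by (simp add: algebra_simps)
  moreover have "\<Phi> z = \<Phi> x"
    using ch unfolding chart_def z by (metis add_uminus_conv_diff scaleR_minus_left)
  moreover have "(z - p) \<bullet> \<nu> = (x - p) \<bullet> \<nu> - u * t"
    using chart_unit[OF ch] by (simp add: z inner_diff_left)
  ultimately show "z \<in> {z. dist p z \<le> (3 + L) * R + h \<and> h \<le> \<Phi> z - (z - p) \<bullet> \<nu>}"
    using x \<open>0 \<le> u * t\<close> by simp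
qed

lemma chart_segment_across:
  assumes ch: "chart r L U p \<nu> \<Phi>" and "0 \<le> L" and "0 \<le> R" and "0 \<le> h" and "R < r"
    and "dist p a \<le> R" and "dist p b \<le> R"
  shows "closed_segment (drop_to_level p \<nu> ((1 + L) * R + h) a) (drop_to_level p \<nu> ((1 + L) * R + h) b)
    \<subseteq> {z. dist p z \<le> (3 + L) * R + h \<and> h \<le> \<Phi> z - (z - p) \<bullet> \<nu>}"
proof
  define m where "m = (1 + L) * R + h"
  define y where "y x = drop_to_level p \<nu> m x + m *\<^sub>R \<nu>" for x
  have "norm \<nu> = 1" "\<nu> \<bullet> \<nu> = 1" using ch by (auto simp: chart_def chart_unit)
  have y: "norm (y x - p) \<le> R" if "dist p x \<le> R" for x
  proof -
    have "y x - p = (x - p) - ((x - p) \<bullet> \<nu>) *\<^sub>R \<nu>" by (simp add: y_def drop_to_level_def algebra_simps)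
    then show ?thesis using norm_diff_inner_scaleR_le[OF \<open>norm \<nu> = 1\<close>, of "x - p"] that
      by (metis dist_commute dist_norm order_trans)
  qed
  fix z assume "z \<in> closed_segment (drop_to_level p \<nu> ((1 + L) * R + h) a) (drop_to_level p \<nu> ((1 + L) * R + h) b)"
  then obtain u where u: "0 \<le> u" "u \<le> 1"
    and z: "z = (1 - u) *\<^sub>R drop_to_level p \<nu> m a + u *\<^sub>R drop_to_level p \<nu> m b"
    by (auto simp: closed_segment_def m_def)
  have "z + m *\<^sub>R \<nu> - p = (1 - u) *\<^sub>R (y a - p) + u *\<^sub>R (y b - p)"
    by (simp add: z y_def algebra_simps)
  also have "norm \<dots> \<le> (1 - u) * R + u * R"
    using u y[OF \<open>dist p a \<le> R\<close>] y[OF \<open>dist p b \<le> R\<close>]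
    by (intro order_trans[OF norm_triangle_ineq] add_mono) (auto intro: mult_left_mono)
  finally have "dist p (z + m *\<^sub>R \<nu>) \<le> R" by (simp add: dist_norm norm_minus_commute algebra_simps)
  then have "z + m *\<^sub>R \<nu> \<in> ball p r" "p \<in> ball p r" using \<open>R < r\<close> \<open>0 \<le> R\<close> by auto
  then have "\<bar>\<Phi> (z + m *\<^sub>R \<nu>) - \<Phi> p\<bar> \<le> L * dist (z + m *\<^sub>R \<nu>) p"
    using ch unfolding chart_def by blast
  moreover have "\<Phi> (z + m *\<^sub>R \<nu>) = \<Phi> z" "\<Phi> p = 0" using ch by (auto simp: chart_def)
  moreover have "L * dist (z + m *\<^sub>R \<nu>) p \<le> L * R"
    using \<open>dist p (z + m *\<^sub>R \<nu>) \<le> R\<close> \<open>0 \<le> L\<close> by (simp add: dist_commute mult_left_mono)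
  ultimately have "- (L * R) \<le> \<Phi> z" by (simp add: abs_le_iff)
  have m: "m = R + L * R + h" by (simp add: m_def algebra_simps)
  have "(z - p) \<bullet> \<nu> = - m"
    using \<open>\<nu> \<bullet> \<nu> = 1\<close> by (simp add: z drop_to_level_def inner_diff_left algebra_simps)
  then have "h \<le> \<Phi> z - (z - p) \<bullet> \<nu>" using \<open>- (L * R) \<le> \<Phi> z\<close> m \<open>0 \<le> R\<close> by linarith
  have "dist (z + m *\<^sub>R \<nu>) z = m"
    using \<open>norm \<nu> = 1\<close> \<open>0 \<le> L\<close> \<open>0 \<le> R\<close> \<open>0 \<le> h\<close> by (simp add: dist_norm m_def)
  then have "dist p z \<le> R + m"
    using dist_triangle[of p z "z + m *\<^sub>R \<nu>"] \<open>dist p (z + m *\<^sub>R \<nu>) \<le> R\<close> by linarith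
  then have "dist p z \<le> (3 + L) * R + h" using m \<open>0 \<le> R\<close> by (simp add: algebra_simps)
  with \<open>h \<le> \<Phi> z - (z - p) \<bullet> \<nu>\<close>
  show "z \<in> {z. dist p z \<le> (3 + L) * R + h \<and> h \<le> \<Phi> z - (z - p) \<bullet> \<nu>}" by simp
qed

lemma chart_path_component:
  assumes ch: "chart r L U p \<nu> \<Phi>" and "0 \<le> L" and "0 \<le> R" and "0 \<le> h"
    and a: "dist p a \<le> R" "h \<le> \<Phi> a - (a - p) \<bullet> \<nu>"
    and b: "dist p b \<le> R" "h \<le> \<Phi> b - (b - p) \<bullet> \<nu>"
    and small: "(3 + L) * R + h < r"
  shows "path_component {z. dist p z \<le> (3 + L) * R + h \<and> h \<le> \<Phi> z - (z - p) \<bullet> \<nu>} a b"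
proof -
  have "0 \<le> L * R" using \<open>0 \<le> L\<close> \<open>0 \<le> R\<close> by simp
  then have "R < r" using small \<open>0 \<le> R\<close> \<open>0 \<le> h\<close> by (simp add: algebra_simps)
  note down = chart_segment_down[OF ch \<open>0 \<le> L\<close> \<open>0 \<le> R\<close> \<open>0 \<le> h\<close>]
  show ?thesis
    using path_component_linepath[OF down[OF a]]
      path_component_linepath[OF chart_segment_across[OF ch assms(2-4) \<open>R < r\<close> a(1) b(1)]]
      path_component_sym[OF path_component_linepath[OF down[OF b]]]
    by (meson path_component_trans)
qed

section \<open>A diameter bound from the volume\<close>

lemma measure_disjoint_balls_le:
  fixes c :: "'i \<Rightarrow> 'a::euclidean_space"
  assumes "finite I" and "\<Omega> \<in> lmeasurable" and sub: "\<And>i. i \<in> I \<Longrightarrow> ball (c i) \<beta> \<subseteq> \<Omega>"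
    and sep: "\<And>i j. i \<in> I \<Longrightarrow> j \<in> I \<Longrightarrow> i \<noteq> j \<Longrightarrow> 2 * \<beta> \<le> dist (c i) (c j)"
  shows "card I * measure lebesgue (ball (0::'a) \<beta>) \<le> measure lebesgue \<Omega>"
proof -
  have "disjoint_family_on (\<lambda>i. ball (c i) \<beta>) I"
    unfolding disjoint_family_on_def
  proof (intro ballI impI equals0I)
    fix i j z assume "i \<in> I" "j \<in> I" "i \<noteq> j" "z \<in> ball (c i) \<beta> \<inter> ball (c j) \<beta>"
    then show False using sep[of i j] dist_triangle_less_add[of "c i" z \<beta> "c j" \<beta>]
      by (auto simp: dist_commute)
  qed
  then have "measure lebesgue (\<Union>i\<in>I. ball (c i) \<beta>) = (\<Sum>i\<in>I. measure lebesgue (ball (c i) \<beta>))"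
    using \<open>finite I\<close> emeasure_lborel_ball_finite by (intro measure_finite_Union) (auto simp: less_top)
  also have "\<dots> = (\<Sum>i\<in>I. measure lebesgue (ball (0::'a) \<beta>))"
    by (metis add.right_neutral ball_translation measure_translation)
  also have "\<dots> = card I * measure lebesgue (ball (0::'a) \<beta>)" by simp
  finally have "measure lebesgue (\<Union>i\<in>I. ball (c i) \<beta>) = card I * measure lebesgue (ball (0::'a) \<beta>)" .
  moreover have "measure lebesgue (\<Union>i\<in>I. ball (c i) \<beta>) \<le> measure lebesgue \<Omega>"
    using sub \<open>finite I\<close> \<open>\<Omega> \<in> lmeasurable\<close> by (intro measure_mono_fmeasurable) auto
  ultimately show ?thesis by simp
qed

lemma connected_imp_dist_value:
  fixes S :: "'a::metric_space set"
  assumes "connected S" and "x \<in> S" "z \<in> S" and "0 \<le> t" "t \<le> dist x z"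
  shows "\<exists>w\<in>S. dist x w = t"
proof -
  have "connected (dist x ` S)"
    using assms(1) by (intro connected_continuous_image continuous_intros)
  then have "{dist x x..dist x z} \<subseteq> dist x ` S"
    using assms(2,3) by (intro connected_contains_Icc) auto
  then show ?thesis using assms(4,5) by auto
qed

lemma C1alpha_boundary_interior_ball:
  fixes \<Omega> :: "'a::euclidean_space set"
  assumes "C1alpha_boundary \<alpha> r L \<Omega>" and "DIM('a) \<ge> 2" and "0 < r" and "0 \<le> L" and "x \<in> \<Omega>"
  obtains c where "dist x c \<le> r" and "ball c (r / (2 * (1 + L))) \<subseteq> \<Omega>"
proof (cases "ball x (r / (2 * (1 + L))) \<subseteq> \<Omega>")
  case True
  then show thesis using \<open>0 < r\<close> by (intro that[of x]) simp_all
next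
  case False
  define \<beta> where "\<beta> = r / (2 * (1 + L))"
  have "\<beta> \<le> r / 2" and \<beta>: "(r / 2) / (1 + L) = \<beta>"
    using \<open>0 < r\<close> \<open>0 \<le> L\<close> by (simp_all add: \<beta>_def field_simps)
  from False obtain y where "y \<in> ball x \<beta>" "y \<notin> \<Omega>" unfolding \<beta>_def by blast
  then obtain q where q: "q \<in> closed_segment x y" "q \<in> frontier \<Omega>"
    using connected_Int_frontier[of "closed_segment x y" \<Omega>] \<open>x \<in> \<Omega>\<close> by auto
  then have "dist x q < \<beta>"
    using dist_in_closed_segment[OF q(1)] \<open>y \<in> ball x \<beta>\<close> by (simp add: dist_commute)
  obtain \<nu> \<Phi> where ch: "chart r L \<Omega> q \<nu> \<Phi>"
    using C1alpha_boundary_chart[OF assms(1) q(2) assms(2,3)] .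
  then have "norm \<nu> = 1" by (simp add: chart_def)
  have "ball (q + (r / 2) *\<^sub>R \<nu>) \<beta> \<subseteq> \<Omega>"
    using chart_ball_subset[OF ch \<open>0 \<le> L\<close>, of "r / 2"] \<open>0 < r\<close> \<open>\<beta> \<le> r / 2\<close> \<beta> by simp
  moreover have "dist x (q + (r / 2) *\<^sub>R \<nu>) \<le> r"
    using dist_triangle[of x "q + (r / 2) *\<^sub>R \<nu>" q] \<open>dist x q < \<beta>\<close> \<open>\<beta> \<le> r / 2\<close>
      \<open>norm \<nu> = 1\<close> \<open>0 < r\<close> by (simp add: dist_norm)
  ultimately show thesis using that \<beta>_def by blast
qed

text \<open>The points of \<open>\<Omega>\<close> at distances \<open>0, s, 2 s, \<dots>, N s\<close> from \<open>x\<close>, where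
  \<open>s = 2 r + 2 \<beta>\<close>, lie within \<open>r\<close> of pairwise disjoint balls of radius \<open>\<beta> = r / (2 (1 + L))\<close>
  contained in \<open>\<Omega>\<close>.\<close>

lemma C1alpha_boundary_measure_ge_if_far:
  fixes \<Omega> :: "'a::euclidean_space set" and N :: nat
  assumes C: "C1alpha_boundary \<alpha> r L \<Omega>" and "DIM('a) \<ge> 2" and "0 < r" and "0 \<le> L"
    and "open \<Omega>" "connected \<Omega>" "bounded \<Omega>" and "x \<in> \<Omega>" "z \<in> \<Omega>"
    and far: "N * (2 * r + 2 * (r / (2 * (1 + L)))) \<le> dist x z"
  shows "(N + 1) * measure lebesgue (ball (0::'a) (r / (2 * (1 + L)))) \<le> measure lebesgue \<Omega>"
proof -
  define \<beta> where "\<beta> = r / (2 * (1 + L))"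
  define s where "s = 2 * r + 2 * \<beta>"
  have "0 < \<beta>" using assms(3,4) by (simp add: \<beta>_def)
  then have "0 < s" using assms(3) unfolding s_def by linarith
  have "\<forall>i\<in>{..N}. \<exists>w\<in>\<Omega>. dist x w = i * s"
  proof (intro ballI connected_imp_dist_value[OF \<open>connected \<Omega>\<close> \<open>x \<in> \<Omega>\<close> \<open>z \<in> \<Omega>\<close>])
    fix i assume "i \<in> {..N}"
    show "0 \<le> real i * s" using \<open>0 < s\<close> by simp
    have "real i * s \<le> N * s" using \<open>i \<in> {..N}\<close> \<open>0 < s\<close> by (simp add: mult_right_mono)
    then show "real i * s \<le> dist x z" using far by (simp add: s_def \<beta>_def)
  qed
  then obtain X where X: "\<And>i. i \<le> N \<Longrightarrow> X i \<in> \<Omega> \<and> dist x (X i) = i * s"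
    using bchoice[of "{..N}"] by (metis atMost_iff)
  have "\<forall>i\<in>{..N}. \<exists>c. dist (X i) c \<le> r \<and> ball c \<beta> \<subseteq> \<Omega>"
    using C1alpha_boundary_interior_ball[OF C assms(2-4)] X unfolding \<beta>_def by (metis atMost_iff)
  then obtain c where c: "\<And>i. i \<le> N \<Longrightarrow> dist (X i) (c i) \<le> r \<and> ball (c i) \<beta> \<subseteq> \<Omega>"
    using bchoice[of "{..N}"] by (metis atMost_iff)
  have sep: "2 * \<beta> \<le> dist (c i) (c j)" if "i \<le> N" "j \<le> N" "i < j" for i j
  proof -
    have "s \<le> (real j - real i) * s" using \<open>i < j\<close> \<open>0 < s\<close> by (simp add: mult_le_cancel_right1)
    moreover have "dist x (X j) \<le> dist x (X i) + dist (X i) (c i) + dist (c i) (c j) + dist (c j) (X j)"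
      using dist_triangle[of x "X j" "X i"] dist_triangle[of "X i" "X j" "c i"]
        dist_triangle[of "c i" "X j" "c j"] by linarith
    moreover have "dist x (X i) = i * s" "dist x (X j) = j * s" using X that by auto
    moreover have "dist (X i) (c i) \<le> r" "dist (c j) (X j) \<le> r"
      using c that by (auto simp: dist_commute)
    ultimately show ?thesis by (simp add: s_def algebra_simps)
  qed
  have "card {..N} * measure lebesgue (ball (0::'a) \<beta>) \<le> measure lebesgue \<Omega>"
  proof (rule measure_disjoint_balls_le)
    show "\<Omega> \<in> lmeasurable" using \<open>open \<Omega>\<close> \<open>bounded \<Omega>\<close> by (simp add: lmeasurable_open)
    show "2 * \<beta> \<le> dist (c i) (c j)" if "i \<in> {..N}" "j \<in> {..N}" "i \<noteq> j" for i j
      using that sep[of i j] sep[of j i] by (cases "i < j") (auto simp: dist_commute)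
  qed (use c in auto)
  then show ?thesis by (simp add: \<beta>_def)
qed

lemma C1alpha_boundary_diameter_bound:
  assumes "DIM('a::euclidean_space) \<ge> 2" and "0 < r" and "0 \<le> L"
  obtains Dm where "0 \<le> Dm" and "\<And>\<Omega> :: 'a set. open \<Omega> \<Longrightarrow> connected \<Omega> \<Longrightarrow> bounded \<Omega> \<Longrightarrow>
      measure lebesgue \<Omega> \<le> M * r ^ DIM('a) \<Longrightarrow> C1alpha_boundary \<alpha> r L \<Omega> \<Longrightarrow> diameter \<Omega> \<le> Dm"
proof -
  define s where "s = 2 * r + 2 * (r / (2 * (1 + L)))"
  define V where "V = measure lebesgue (ball (0::'a) (r / (2 * (1 + L))))"
  define N where "N = nat \<lceil>M * r ^ DIM('a) / V\<rceil>"
  have "0 < r / (2 * (1 + L))" using assms(2,3) by simp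
  then have "0 < s" "0 < V" using assms(2) by (simp_all add: s_def V_def content_ball_pos)
  have "M * r ^ DIM('a) / V \<le> real N" by (simp add: N_def) linarith
  then have NV: "M * r ^ DIM('a) < real (N + 1) * V" using \<open>0 < V\<close> by (simp add: field_simps)
  have "diameter \<Omega> \<le> N * s"
    if "open \<Omega>" "connected \<Omega>" "bounded \<Omega>" and "measure lebesgue \<Omega> \<le> M * r ^ DIM('a)"
      and "C1alpha_boundary \<alpha> r L \<Omega>" for \<Omega> :: "'a set"
  proof (rule diameter_le)
    show "\<Omega> \<noteq> {} \<or> 0 \<le> real N * s" using \<open>0 < s\<close> by simp
    show "norm (x - z) \<le> N * s" if "x \<in> \<Omega>" "z \<in> \<Omega>" for x z
      using C1alpha_boundary_measure_ge_if_far[OF \<open>C1alpha_boundary \<alpha> r L \<Omega>\<close> assms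
          \<open>open \<Omega>\<close> \<open>connected \<Omega>\<close> \<open>bounded \<Omega>\<close> that, of N]
        \<open>measure lebesgue \<Omega> \<le> M * r ^ DIM('a)\<close> NV
      by (force simp: s_def V_def dist_norm)
  qed
  moreover have "0 \<le> N * s" using \<open>0 < s\<close> by (intro mult_nonneg_nonneg) auto
  ultimately show thesis by (intro that)
qed

section \<open>Paths from the inner to the outer boundary\<close>

text \<open>Charts of \<open>\<partial>D\<close> are used in balls of radius
  \<open>(3 + L) ((2 L + 5) \<epsilon>) + \<epsilon>\<close>, the radius in \<open>chart_path_component\<close> for \<open>R = (2 L + 5) \<epsilon>\<close>
  and \<open>h = \<epsilon>\<close>; the assumption \<open>eps_small\<close> keeps this below \<open>r / 4\<close> and \<open>\<delta> / 4\<close>.\<close>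

locale collar =
  fixes \<Omega> D :: "'a::euclidean_space set" and r L \<delta> \<epsilon> :: real
    and nu :: "'a \<Rightarrow> 'a" and Phi :: "'a \<Rightarrow> 'a \<Rightarrow> real"
  assumes L_nonneg: "0 \<le> L" and eps_pos: "0 < \<epsilon>"
    and eps_small: "(3 + L) * ((2 * L + 5) * \<epsilon>) + \<epsilon> \<le> min r \<delta> / 4"
    and open_Omega: "open \<Omega>" and bounded_Omega: "bounded \<Omega>"
    and closure_D_subset: "closure D \<subseteq> \<Omega>"
    and connected_gap: "connected (\<Omega> - closure D)"
    and dist_D_frontier: "\<And>x y. x \<in> D \<Longrightarrow> y \<in> frontier \<Omega> \<Longrightarrow> \<delta> \<le> dist x y"
    and chart_D: "\<And>p. p \<in> frontier D \<Longrightarrow> chart r L D p (nu p) (Phi p)"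
begin

lemma collar_scale:
  shows below_radius_ge: "5 * \<epsilon> \<le> (2 * L + 5) * \<epsilon>"
    and eps_le_half_delta: "\<epsilon> \<le> \<delta> / 2"
    and below_radius_le: "(2 * L + 5) * \<epsilon> \<le> r"
    and below_radius_chart_lt: "(L + 2) * ((2 * L + 5) * \<epsilon>) < r"
    and link_radius_lt: "(3 + L) * ((2 * L + 5) * \<epsilon>) + \<epsilon> < r"
    and link_radius_le: "(3 + L) * ((2 * L + 5) * \<epsilon>) + \<epsilon> + \<epsilon> \<le> r"
    and link_radius_lt_delta: "(3 + L) * ((2 * L + 5) * \<epsilon>) + \<epsilon> < \<delta>"
    and below_radius_lt_delta: "(2 * L + 5) * \<epsilon> < \<delta>"
proof -
  show "5 * \<epsilon> \<le> (2 * L + 5) * \<epsilon>" using L_nonneg eps_pos by (intro mult_right_mono) auto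
  then have "0 \<le> (2 * L + 5) * \<epsilon>" using eps_pos by linarith
  then have "1 * ((2 * L + 5) * \<epsilon>) \<le> (L + 2) * ((2 * L + 5) * \<epsilon>)"
    "(L + 2) * ((2 * L + 5) * \<epsilon>) \<le> (3 + L) * ((2 * L + 5) * \<epsilon>)"
    using L_nonneg by (intro mult_right_mono; simp)+
  then show "\<epsilon> \<le> \<delta> / 2" "(2 * L + 5) * \<epsilon> \<le> r" "(L + 2) * ((2 * L + 5) * \<epsilon>) < r"
    "(3 + L) * ((2 * L + 5) * \<epsilon>) + \<epsilon> < r" "(3 + L) * ((2 * L + 5) * \<epsilon>) + \<epsilon> + \<epsilon> \<le> r"
    "(3 + L) * ((2 * L + 5) * \<epsilon>) + \<epsilon> < \<delta>" "(2 * L + 5) * \<epsilon> < \<delta>"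
    using eps_small eps_pos \<open>5 * \<epsilon> \<le> (2 * L + 5) * \<epsilon>\<close> by linarith+
qed

definition far_region :: "'a set" where
  "far_region = {z \<in> \<Omega>. \<epsilon> / (2 * (1 + L)) \<le> infdist z D}"

definition push_out :: "'a \<Rightarrow> 'a \<Rightarrow> 'a" where
  "push_out p w = w - (2 * (1 + L) * \<epsilon>) *\<^sub>R nu p"

text \<open>In the second case the boundary point \<open>p\<close> is not unique, so \<open>representative\<close> is a
  relation and not a continuous map; \<open>representatives_locally_path_component\<close> replaces
  continuity.\<close>

definition representative :: "'a \<Rightarrow> 'a \<Rightarrow> bool" where
  "representative w a \<longleftrightarrow> (\<epsilon> \<le> infdist w D \<and> a = w) \<or> (\<exists>p\<in>frontier D. dist w p < \<epsilon> \<and> a = push_out p w)"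

definition below_graph :: "'a \<Rightarrow> 'a set" where
  "below_graph p = {z. dist p z \<le> (2 * L + 5) * \<epsilon> \<and> \<epsilon> \<le> Phi p z - (z - p) \<bullet> nu p}"

lemma near_D_in_Omega:
  assumes "p \<in> closure D" and "dist p z < \<delta>"
  shows "z \<in> \<Omega>"
proof (rule ccontr)
  assume "z \<notin> \<Omega>"
  obtain x where "x \<in> D" "dist x p < \<delta> - dist p z"
    using assms closure_approachable[of p D] by (metis diff_gt_0_iff_gt)
  then have "dist x z < \<delta>" using dist_triangle[of x z p] by linarith
  have "x \<in> \<Omega>" using \<open>x \<in> D\<close> closure_D_subset closure_subset by blast
  then obtain q where "q \<in> closed_segment x z" "q \<in> frontier \<Omega>"
    using connected_Int_frontier[of "closed_segment x z" \<Omega>] \<open>z \<notin> \<Omega>\<close> by auto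
  then have "dist x q < \<delta>"
    using dist_in_closed_segment \<open>dist x z < \<delta>\<close> by (metis dist_commute order.strict_trans1)
  then show False using dist_D_frontier[OF \<open>x \<in> D\<close> \<open>q \<in> frontier \<Omega>\<close>] by simp
qed

lemma chart_region_subset_far_region:
  assumes p: "p \<in> frontier D" and z: "dist p z \<le> (3 + L) * ((2 * L + 5) * \<epsilon>) + \<epsilon>"
    and h: "\<epsilon> \<le> Phi p z - (z - p) \<bullet> nu p"
  shows "z \<in> far_region"
proof -
  have "z \<in> ball p r" using z link_radius_lt by simp
  moreover have "D \<noteq> {}" using p by auto
  ultimately have "min (\<epsilon> / (1 + L)) (r - dist p z) \<le> infdist z D"
    using chart_le_infdist[OF chart_D[OF p] L_nonneg] h by simp
  moreover have "\<epsilon> / (1 + L) \<le> \<epsilon>" using L_nonneg eps_pos by (simp add: divide_le_eq)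
  moreover have "\<epsilon> / (2 * (1 + L)) \<le> \<epsilon> / (1 + L)"
    using L_nonneg eps_pos by (simp add: frac_le)
  ultimately have "\<epsilon> / (2 * (1 + L)) \<le> infdist z D" using z link_radius_le by linarith
  moreover have "z \<in> \<Omega>"
    using near_D_in_Omega[of p z] p z link_radius_lt_delta by (simp add: frontier_def)
  ultimately show ?thesis by (simp add: far_region_def)
qed

lemma below_graph_path_component:
  assumes "p \<in> frontier D" and "a \<in> below_graph p" and "b \<in> below_graph p"
  shows "path_component far_region a b"
proof (rule path_component_of_subset)
  show "path_component {z. dist p z \<le> (3 + L) * ((2 * L + 5) * \<epsilon>) + \<epsilon> \<and>
      \<epsilon> \<le> Phi p z - (z - p) \<bullet> nu p} a b"
    using chart_path_component[OF chart_D[OF assms(1)] L_nonneg] assms(2,3) eps_pos L_nonneg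
      link_radius_lt by (simp add: below_graph_def)
qed (use chart_region_subset_far_region[OF assms(1)] in blast)

lemma push_out_far_from_D:
  assumes p: "p \<in> frontier D" and "w \<notin> D" and "dist w p < \<epsilon>"
  shows "dist p (push_out p w) \<le> (2 * L + 3) * \<epsilon>" and "2 * \<epsilon> \<le> infdist (push_out p w) D"
proof -
  note ch = chart_D[OF p]
  have "norm (nu p) = 1" using ch by (simp add: chart_def)
  have "dist p w < r"
    using \<open>dist w p < \<epsilon>\<close> below_radius_le below_radius_ge eps_pos dist_commute[of w p] by linarith
  then have "w \<in> D \<longleftrightarrow> Phi p w < (w - p) \<bullet> nu p" using ch unfolding chart_def by simp
  then have "(w - p) \<bullet> nu p \<le> Phi p w" using \<open>w \<notin> D\<close> by linarith
  have "Phi p (push_out p w) = Phi p w"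
    using ch unfolding chart_def push_out_def by (metis add_uminus_conv_diff scaleR_minus_left)
  have "(push_out p w - p) \<bullet> nu p = (w - p) \<bullet> nu p - 2 * (1 + L) * \<epsilon>"
    using chart_unit[OF ch] by (simp add: push_out_def inner_diff_left)
  have "dist w (push_out p w) = 2 * (1 + L) * \<epsilon>"
    using \<open>norm (nu p) = 1\<close> L_nonneg eps_pos by (simp add: push_out_def dist_norm)
  then show "dist p (push_out p w) \<le> (2 * L + 3) * \<epsilon>"
    using dist_triangle[of p "push_out p w" w] \<open>dist w p < \<epsilon>\<close> by (simp add: dist_commute algebra_simps)
  then have ball: "push_out p w \<in> ball p r" and "2 * \<epsilon> \<le> r - dist p (push_out p w)"
    using below_radius_le eps_pos by (simp_all add: algebra_simps)
  have "D \<noteq> {}" using p by auto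
  have "(push_out p w - p) \<bullet> nu p + 2 * (1 + L) * \<epsilon> \<le> Phi p (push_out p w)"
    using \<open>Phi p (push_out p w) = Phi p w\<close> \<open>(w - p) \<bullet> nu p \<le> Phi p w\<close>
      \<open>(push_out p w - p) \<bullet> nu p = (w - p) \<bullet> nu p - 2 * (1 + L) * \<epsilon>\<close> by linarith
  from chart_le_infdist[OF ch L_nonneg ball this \<open>D \<noteq> {}\<close>]
  have "min (2 * (1 + L) * \<epsilon> / (1 + L)) (r - dist p (push_out p w)) \<le> infdist (push_out p w) D" .
  moreover have "2 * (1 + L) * \<epsilon> / (1 + L) = 2 * \<epsilon>" using L_nonneg by (simp add: field_simps)
  ultimately show "2 * \<epsilon> \<le> infdist (push_out p w) D" using \<open>2 * \<epsilon> \<le> r - dist p (push_out p w)\<close> by simp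
qed

lemma representative_in_below_graph:
  assumes "w \<notin> D" and "representative w a" and p: "p \<in> frontier D" and "dist p w \<le> 3 / 2 * \<epsilon>"
  shows "a \<in> below_graph p"
proof -
  have depth: "infdist x D \<le> Phi p x - (x - p) \<bullet> nu p" if "x \<notin> D" "dist p x \<le> (2 * L + 5) * \<epsilon>" for x
  proof (rule chart_infdist_le[OF chart_D[OF p] L_nonneg \<open>x \<notin> D\<close>])
    have "(L + 2) * dist p x \<le> (L + 2) * ((2 * L + 5) * \<epsilon>)"
      using that(2) L_nonneg by (simp add: mult_left_mono)
    then show "(L + 2) * dist p x < r" using below_radius_chart_lt by linarith
  qed
  from \<open>representative w a\<close> consider (far) "\<epsilon> \<le> infdist w D" "a = w"
    | (pushed) q where "q \<in> frontier D" "dist w q < \<epsilon>" "a = push_out q w"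
    unfolding representative_def by blast
  then show ?thesis
  proof cases
    case far
    have "dist p w \<le> (2 * L + 5) * \<epsilon>" using \<open>dist p w \<le> 3 / 2 * \<epsilon>\<close> below_radius_ge eps_pos by linarith
    then show ?thesis using far depth[OF \<open>w \<notin> D\<close>] by (simp add: below_graph_def)
  next
    case pushed
    have "2 * \<epsilon> \<le> infdist a D" using push_out_far_from_D[OF pushed(1) \<open>w \<notin> D\<close> pushed(2)] pushed(3) by simp
    then have "a \<notin> D" using eps_pos by auto
    have "dist w a = 2 * (1 + L) * \<epsilon>"
      using chart_D[OF pushed(1)] L_nonneg eps_pos by (simp add: pushed(3) push_out_def chart_def dist_norm)
    then have "dist p a \<le> (2 * L + 5) * \<epsilon>"
      using dist_triangle[of p a w] \<open>dist p w \<le> 3 / 2 * \<epsilon>\<close> eps_pos by (simp add: algebra_simps)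
    then show ?thesis
      using depth[OF \<open>a \<notin> D\<close>] \<open>2 * \<epsilon> \<le> infdist a D\<close> eps_pos by (simp add: below_graph_def)
  qed
qed

lemma representative_exists:
  assumes "D \<noteq> {}" and "w \<in> \<Omega> - closure D"
  shows "\<exists>a. representative w a"
proof (cases "\<epsilon> \<le> infdist w D")
  case True
  then show ?thesis by (auto simp: representative_def)
next
  case False
  have "\<exists>x\<in>D. dist w x < \<epsilon>"
  proof (rule ccontr)
    assume "\<not> (\<exists>x\<in>D. dist w x < \<epsilon>)"
    then have "\<epsilon> \<le> infdist w D" by (intro le_infdistI[OF \<open>D \<noteq> {}\<close>]) (auto simp: not_less)
    with False show False by simp
  qed
  then obtain x where "x \<in> D" "dist w x < \<epsilon>" by blast
  moreover have "w \<notin> D" using assms(2) closure_subset by blast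
  ultimately obtain q where q: "q \<in> closed_segment w x" "q \<in> frontier D"
    using connected_Int_frontier[of "closed_segment w x" D] by auto
  have "dist w q \<le> dist w x" using dist_in_closed_segment[OF q(1)] by (simp add: dist_commute)
  then have "dist w q < \<epsilon>" using \<open>dist w x < \<epsilon>\<close> by linarith
  then have "representative w (push_out q w)" using q(2) unfolding representative_def by blast
  then show ?thesis ..
qed

lemma representatives_near_frontier_path_component:
  assumes "x \<notin> D" and "x' \<notin> D" and "dist x x' < \<epsilon> / 2" and "representative x b" and "representative x' b'"
    and "p \<in> frontier D" and "dist x p < \<epsilon>"
  shows "path_component far_region b b'"
proof (rule below_graph_path_component[OF \<open>p \<in> frontier D\<close>])
  show "b \<in> below_graph p" using representative_in_below_graph[OF assms(1,4,6)] assms(7) eps_pos by (simp add: dist_commute)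
  show "b' \<in> below_graph p"
    using representative_in_below_graph[OF assms(2,5,6)] dist_triangle[of p x' x] assms(3,7) by (simp add: dist_commute)
qed

lemma segment_subset_far_region:
  assumes "\<epsilon> \<le> infdist w D" and "ball w \<rho> \<subseteq> \<Omega>" and "dist w w' < \<epsilon> / 2" and "dist w w' < \<rho>"
  shows "closed_segment w w' \<subseteq> far_region"
proof
  fix z assume "z \<in> closed_segment w w'"
  then have "dist w z \<le> dist w w'" using dist_in_closed_segment by (metis dist_commute)
  then have "z \<in> \<Omega>" using assms(2,4) by auto
  have "infdist w D \<le> infdist z D + dist w z" by (rule infdist_triangle)
  moreover have "\<epsilon> / (2 * (1 + L)) \<le> \<epsilon> / 2"
    using L_nonneg eps_pos by (intro divide_left_mono) auto
  ultimately have "\<epsilon> / (2 * (1 + L)) \<le> infdist z D"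
    using assms(1,3) \<open>dist w z \<le> dist w w'\<close> by linarith
  then show "z \<in> far_region" using \<open>z \<in> \<Omega>\<close> by (simp add: far_region_def)
qed

lemma representatives_locally_path_component:
  assumes w: "w \<in> \<Omega> - closure D"
  shows "\<exists>e>0. \<forall>w'\<in>\<Omega> - closure D. dist w w' < e \<longrightarrow>
           (\<forall>a a'. representative w a \<longrightarrow> representative w' a' \<longrightarrow> path_component far_region a a')"
proof -
  obtain \<rho> where "0 < \<rho>" "ball w \<rho> \<subseteq> \<Omega>"
    using open_Omega w open_contains_ball by blast
  show ?thesis
  proof (intro exI[of _ "min (\<epsilon> / 2) \<rho>"] conjI ballI impI allI)
    show "0 < min (\<epsilon> / 2) \<rho>" using eps_pos \<open>0 < \<rho>\<close> by simp
    fix w' a a' assume w': "w' \<in> \<Omega> - closure D" and "dist w w' < min (\<epsilon> / 2) \<rho>"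
      and "representative w a" "representative w' a'"
    then have "w \<notin> D" "w' \<notin> D" "dist w w' < \<epsilon> / 2" "dist w w' < \<rho>"
      using w closure_subset by auto
    from \<open>representative w a\<close> \<open>representative w' a'\<close> consider
        (pushed) p where "p \<in> frontier D" "dist w p < \<epsilon>"
      | (pushed') p where "p \<in> frontier D" "dist w' p < \<epsilon>"
      | (far) "\<epsilon> \<le> infdist w D" "a = w" "a' = w'"
      unfolding representative_def by blast
    then show "path_component far_region a a'"
    proof cases
      case pushed
      then show ?thesis
        using representatives_near_frontier_path_component \<open>w \<notin> D\<close> \<open>w' \<notin> D\<close> \<open>dist w w' < \<epsilon> / 2\<close>
          \<open>representative w a\<close> \<open>representative w' a'\<close> by blast
    next
      case pushed'
      then show ?thesis
        using representatives_near_frontier_path_component \<open>w \<notin> D\<close> \<open>w' \<notin> D\<close> \<open>dist w w' < \<epsilon> / 2\<close>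
          \<open>representative w a\<close> \<open>representative w' a'\<close> path_component_sym by (metis dist_commute)
    next
      case far
      then show ?thesis
        using segment_subset_far_region[OF far(1) \<open>ball w \<rho> \<subseteq> \<Omega>\<close>] \<open>dist w w' < \<epsilon> / 2\<close>
          \<open>dist w w' < \<rho>\<close> path_component_linepath by blast
    qed
  qed
qed

lemma far_points_path_component:
  assumes "w \<in> \<Omega>" "\<epsilon> \<le> infdist w D" and "w' \<in> \<Omega>" "\<epsilon> \<le> infdist w' D"
  shows "path_component far_region w w'"
proof (rule connected_imp_path_component_representatives[OF connected_gap representative_exists representatives_locally_path_component])
  show "D \<noteq> {}" using assms(2) eps_pos by (auto simp: infdist_def)
  show "w \<in> \<Omega> - closure D" "w' \<in> \<Omega> - closure D"
    using assms eps_pos infdist_pos_not_in_closure by force+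
  show "representative w w" "representative w' w'" using assms by (simp_all add: representative_def)
qed


lemma normal_segment:
  assumes P: "P \<in> frontier D" and "0 \<le> t" and "t \<le> (1 + L) * \<epsilon>"
  shows "t \<le> (1 + L) * infdist (P - t *\<^sub>R nu P) D" and "P - t *\<^sub>R nu P \<in> \<Omega>"
proof -
  note ch = chart_D[OF P]
  define z where "z = P - t *\<^sub>R nu P"
  have "norm (nu P) = 1" "Phi P P = 0" using ch by (auto simp: chart_def)
  have "dist P z = t" using \<open>norm (nu P) = 1\<close> \<open>0 \<le> t\<close> by (simp add: z_def dist_norm)
  have "0 \<le> (1 + L) * \<epsilon>" using L_nonneg eps_pos by simp
  then have "t + t \<le> (2 * L + 5) * \<epsilon>" using \<open>t \<le> (1 + L) * \<epsilon>\<close> eps_pos by (simp add: algebra_simps)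
  then have "dist P z < r" "t \<le> r - dist P z"
    using \<open>dist P z = t\<close> below_radius_le below_radius_ge eps_pos by linarith+
  then have "z \<in> ball P r" by simp
  have "Phi P z = 0"
    using ch \<open>Phi P P = 0\<close> unfolding chart_def z_def by (metis add_uminus_conv_diff scaleR_minus_left)
  moreover have "(z - P) \<bullet> nu P = - t" using chart_unit[OF ch] by (simp add: z_def)
  ultimately have "(z - P) \<bullet> nu P + t \<le> Phi P z" by simp
  moreover have "D \<noteq> {}" using P by auto
  ultimately have "min (t / (1 + L)) (r - dist P z) \<le> infdist z D"
    using chart_le_infdist[OF ch L_nonneg \<open>z \<in> ball P r\<close>] by blast
  moreover have "t / (1 + L) \<le> t"
    using L_nonneg mult_nonneg_nonneg[OF \<open>0 \<le> t\<close> L_nonneg] by (simp add: divide_le_eq algebra_simps)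
  ultimately have "t / (1 + L) \<le> infdist z D" using \<open>t \<le> r - dist P z\<close> by linarith
  then show "t \<le> (1 + L) * infdist (P - t *\<^sub>R nu P) D"
    using L_nonneg by (simp add: z_def pos_divide_le_eq mult.commute)
  have "dist P z < \<delta>"
    using \<open>dist P z = t\<close> \<open>t + t \<le> (2 * L + 5) * \<epsilon>\<close> \<open>0 \<le> t\<close> below_radius_lt_delta by linarith
  then show "P - t *\<^sub>R nu P \<in> \<Omega>"
    using near_D_in_Omega[of P z] P by (simp add: z_def frontier_def)
qed

lemma path_to_outer_frontier:
  assumes "w\<^sub>0 \<in> \<Omega>" and "\<epsilon> \<le> infdist w\<^sub>0 D"
  obtains h where "path h" "pathstart h = w\<^sub>0" "pathfinish h \<in> frontier \<Omega>"
    "\<And>t. 0 \<le> t \<Longrightarrow> t < 1 \<Longrightarrow> h t \<in> \<Omega>"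
    "\<And>z. z \<in> path_image h \<Longrightarrow> \<epsilon> / (2 * (1 + L)) \<le> infdist z D"
proof -
  have "frontier \<Omega> \<noteq> {}" using assms(1) bounded_Omega frontier_eq_empty[of \<Omega>] by auto
  then obtain q where q: "q \<in> frontier \<Omega>" by blast
  then have "q \<notin> \<Omega>" using open_Omega by (simp add: frontier_def interior_open)
  have "D \<noteq> {}" using assms(2) eps_pos by (auto simp: infdist_def)
  have far: "\<epsilon> \<le> infdist z D" if "dist z q < \<delta> / 2" for z
  proof (rule le_infdistI[OF \<open>D \<noteq> {}\<close>])
    fix x assume "x \<in> D"
    then show "\<epsilon> \<le> dist z x"
      using dist_D_frontier[OF \<open>x \<in> D\<close> q] dist_triangle[of x q z] that eps_le_half_delta
      by (simp add: dist_commute)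
  qed
  have "0 < \<delta> / 2" using eps_pos eps_le_half_delta by linarith
  moreover have "q \<in> closure \<Omega>" using q by (simp add: frontier_def)
  ultimately obtain w where "w \<in> \<Omega>" "dist w q < \<delta> / 2" unfolding closure_approachable by blast
  then obtain g where g: "path g" "path_image g \<subseteq> far_region" "pathstart g = w\<^sub>0" "pathfinish g = w"
    using far far_points_path_component[OF assms] unfolding path_component_def by blast
  obtain h where h: "path h" "pathstart h = w\<^sub>0" "pathfinish h \<in> frontier \<Omega>"
      "path_image h \<subseteq> path_image (g +++ linepath w q)" "\<And>t. 0 \<le> t \<Longrightarrow> t < 1 \<Longrightarrow> h t \<in> \<Omega>"
    using path_to_frontier_of_open[OF open_Omega, of "g +++ linepath w q"] g assms(1) \<open>q \<notin> \<Omega>\<close>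
    by auto
  show thesis
  proof (rule that[OF h(1,2,3,5)])
    fix z assume "z \<in> path_image h"
    then consider "z \<in> path_image g" | "z \<in> closed_segment w q"
      using h(4) g(4) by (auto simp: path_image_join)
    then show "\<epsilon> / (2 * (1 + L)) \<le> infdist z D"
    proof cases
      case 1
      then show ?thesis using g(2) by (auto simp: far_region_def)
    next
      case 2
      then have "dist z q < \<delta> / 2"
        using dist_in_closed_segment \<open>dist w q < \<delta> / 2\<close> by (metis order.strict_trans1)
      moreover have "\<epsilon> / (2 * (1 + L)) \<le> \<epsilon>" using L_nonneg eps_pos by (simp add: divide_le_eq)
      ultimately show ?thesis using far by fastforce
    qed
  qed
qed

lemma normal_segment_in_gap:
  assumes "P \<in> frontier D" and "0 < t" and "t \<le> (1 + L) * \<epsilon>"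
  shows "P - t *\<^sub>R nu P \<in> \<Omega> - closure D"
proof -
  have "0 < (1 + L) * infdist (P - t *\<^sub>R nu P) D"
    using normal_segment(1)[OF assms(1) _ assms(3)] \<open>0 < t\<close> by linarith
  then show ?thesis
    using normal_segment(2)[OF assms(1) _ assms(3)] \<open>0 < t\<close> L_nonneg infdist_pos_not_in_closure
    by (auto simp: zero_less_mult_iff)
qed

lemma diameter_factor_ge: "1 + L \<le> (1 + L) * (1 + 2 * diameter \<Omega> / \<epsilon>)"
  using diameter_ge_0[OF bounded_Omega] L_nonneg eps_pos by (simp add: algebra_simps)

lemma normal_segment_dist_le:
  assumes "P \<in> frontier D" and "0 \<le> t" and "t \<le> (1 + L) * \<epsilon>"
  shows "dist (P - t *\<^sub>R nu P) P \<le> (1 + L) * (1 + 2 * diameter \<Omega> / \<epsilon>) * infdist (P - t *\<^sub>R nu P) D"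
proof -
  have "dist (P - t *\<^sub>R nu P) P = t"
    using chart_D[OF assms(1)] \<open>0 \<le> t\<close> by (simp add: chart_def dist_norm)
  also have "\<dots> \<le> (1 + L) * infdist (P - t *\<^sub>R nu P) D" by (rule normal_segment(1)[OF assms])
  also have "\<dots> \<le> (1 + L) * (1 + 2 * diameter \<Omega> / \<epsilon>) * infdist (P - t *\<^sub>R nu P) D"
    using diameter_factor_ge infdist_nonneg by (rule mult_right_mono)
  finally show ?thesis .
qed

lemma dist_le_if_far_from_D:
  assumes "z \<in> closure \<Omega>" and "P \<in> closure D" and far: "\<epsilon> / (2 * (1 + L)) \<le> infdist z D"
  shows "dist z P \<le> (1 + L) * (1 + 2 * diameter \<Omega> / \<epsilon>) * infdist z D"
proof -
  have "P \<in> closure \<Omega>" using assms(2) closure_D_subset closure_subset by blast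
  then have "dist z P \<le> diameter \<Omega>"
    using diameter_bounded_bound[of "closure \<Omega>" z P] assms(1) bounded_Omega
    by (simp add: diameter_closure bounded_closure)
  also have "\<dots> = 2 * (1 + L) * diameter \<Omega> / \<epsilon> * (\<epsilon> / (2 * (1 + L)))"
    using L_nonneg eps_pos by (simp add: divide_simps)
  also have "\<dots> \<le> 2 * (1 + L) * diameter \<Omega> / \<epsilon> * infdist z D"
    using far diameter_ge_0[OF bounded_Omega] L_nonneg eps_pos by (intro mult_left_mono) auto
  also have "\<dots> \<le> (1 + L) * (1 + 2 * diameter \<Omega> / \<epsilon>) * infdist z D"
    using infdist_nonneg[of z D] L_nonneg by (intro mult_right_mono) (simp_all add: algebra_simps)
  finally show ?thesis .
qed

theorem exists_non_tangential_path:
  assumes P: "P \<in> frontier D"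
  shows "\<exists>\<gamma>. path \<gamma> \<and> pathstart \<gamma> = P \<and> pathfinish \<gamma> \<in> frontier \<Omega> \<and>
      (\<forall>t\<in>{0<..<1}. \<gamma> t \<in> \<Omega> - closure D) \<and>
      (\<forall>z\<in>path_image \<gamma>. dist z P \<le> (1 + L) * (1 + 2 * diameter \<Omega> / \<epsilon>) * infdist z D)"
proof -
  define T where "T = (1 + L) * \<epsilon>"
  define P\<^sub>1 where "P\<^sub>1 = P - T *\<^sub>R nu P"
  have "0 < T" using L_nonneg eps_pos by (simp add: T_def)
  have "P\<^sub>1 \<in> \<Omega>" "\<epsilon> \<le> infdist P\<^sub>1 D"
    using normal_segment[OF P, of T] \<open>0 < T\<close> L_nonneg by (simp_all add: P\<^sub>1_def T_def)
  then obtain h where h: "path h" "pathstart h = P\<^sub>1" "pathfinish h \<in> frontier \<Omega>"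
      "\<And>t. 0 \<le> t \<Longrightarrow> t < 1 \<Longrightarrow> h t \<in> \<Omega>"
      "\<And>z. z \<in> path_image h \<Longrightarrow> \<epsilon> / (2 * (1 + L)) \<le> infdist z D"
    using path_to_outer_frontier by blast
  have segment: "linepath P P\<^sub>1 s = P - (s * T) *\<^sub>R nu P" for s
    by (simp add: linepath_def P\<^sub>1_def algebra_simps)
  have "0 < \<epsilon> / (2 * (1 + L))" using L_nonneg eps_pos by simp
  have tail: "h t \<in> \<Omega> - closure D" if "0 \<le> t" "t < 1" for t
    using h(4)[of t] h(5)[of "h t"] that \<open>0 < \<epsilon> / (2 * (1 + L))\<close> infdist_pos_not_in_closure
    by (force simp: path_image_def)
  have normal: "linepath P P\<^sub>1 s \<in> \<Omega> - closure D" if "0 < s" "s \<le> 1" for s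
    using normal_segment_in_gap[OF P, of "s * T"] that \<open>0 < T\<close>
    by (simp add: segment T_def mult_left_le_one_le)
  have "dist z P \<le> (1 + L) * (1 + 2 * diameter \<Omega> / \<epsilon>) * infdist z D"
    if "z \<in> path_image (linepath P P\<^sub>1) \<union> path_image h" for z
  proof -
    have "z \<in> closure \<Omega>" if "z \<in> path_image h"
    proof -
      from that obtain t where "t \<in> {0..1}" "z = h t" unfolding path_image_def by blast
      then show ?thesis using h(3) h(4)[of t] closure_subset
        by (cases "t < 1") (auto simp: frontier_def pathfinish_def)
    qed
    then show ?thesis
      using that normal_segment_dist_le[OF P] dist_le_if_far_from_D[OF _ _ h(5)] P \<open>0 < T\<close>
      by (auto simp: path_image_def segment T_def frontier_def mult_left_le_one_le)
  qed
  moreover have "(linepath P P\<^sub>1 +++ h) t \<in> \<Omega> - closure D" if "t \<in> {0<..<1}" for t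
    using joinpaths_in_open_interval[OF normal tail that] .
  ultimately show ?thesis
    using h(1-3) by (intro exI[of _ "linepath P P\<^sub>1 +++ h"]) (auto simp: path_image_join)
qed

end

lemma C1alpha_inclusion_non_tangential_path:
  fixes \<Omega> D :: "'a::euclidean_space set"
  assumes "DIM('a) \<ge> 2" and "0 \<le> L" and "0 < \<epsilon>"
    and small: "(3 + L) * ((2 * L + 5) * \<epsilon>) + \<epsilon> \<le> min r \<delta> / 4"
    and "open \<Omega>" and "bounded \<Omega>" and "closure D \<subseteq> \<Omega>" and "connected (\<Omega> - closure D)"
    and "\<forall>x\<in>D. \<forall>y\<in>frontier \<Omega>. \<delta> \<le> dist x y" and "C1alpha_boundary \<alpha> r L D"
    and c: "(1 + L) * (1 + 2 * diameter \<Omega> / \<epsilon>) \<le> c" and P: "P \<in> frontier D"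
  shows "\<exists>\<gamma>. path \<gamma> \<and> pathstart \<gamma> = P \<and> pathfinish \<gamma> \<in> frontier \<Omega> \<and>
      (\<forall>t\<in>{0<..<1}. \<gamma> t \<in> \<Omega> - closure D) \<and> (\<forall>z\<in>path_image \<gamma>. dist z P \<le> c * infdist z D)"
proof -
  have "0 \<le> (3 + L) * ((2 * L + 5) * \<epsilon>)" using \<open>0 \<le> L\<close> \<open>0 < \<epsilon>\<close> by simp
  then have "0 < r" using small \<open>0 < \<epsilon>\<close> by linarith
  then have "\<forall>p\<in>frontier D. \<exists>\<nu> \<Phi>. chart r L D p \<nu> \<Phi>"
    using C1alpha_boundary_chart \<open>C1alpha_boundary \<alpha> r L D\<close> \<open>DIM('a) \<ge> 2\<close> by metis
  then obtain nu Phi where "\<And>p. p \<in> frontier D \<Longrightarrow> chart r L D p (nu p) (Phi p)" by metis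
  then interpret collar \<Omega> D r L \<delta> \<epsilon> nu Phi
    using assms by unfold_locales auto
  obtain \<gamma> where "path \<gamma>" "pathstart \<gamma> = P" "pathfinish \<gamma> \<in> frontier \<Omega>"
      "\<forall>t\<in>{0<..<1}. \<gamma> t \<in> \<Omega> - closure D"
    and bound: "\<And>z. z \<in> path_image \<gamma> \<Longrightarrow>
      dist z P \<le> (1 + L) * (1 + 2 * diameter \<Omega> / \<epsilon>) * infdist z D"
    using exists_non_tangential_path[OF P] by blast
  moreover have "dist z P \<le> c * infdist z D" if "z \<in> path_image \<gamma>" for z
    using bound[OF that] mult_right_mono[OF c infdist_nonneg, of z D] by linarith
  ultimately show ?thesis by blast
qed

theorem lemma4p1:
  fixes r M \<delta> L \<alpha> k :: real
  assumes "DIM('a::euclidean_space) \<ge> 2"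
    and "r > 0" and "M > 0" and "\<delta> > 0" and "L > 0"
    and "0 < \<alpha>" and "\<alpha> < 1" and "k > 0" and "k \<noteq> 1"
  shows "\<exists>c>0. \<forall>(\<Omega>::'a set) D.
     open \<Omega> \<and> connected \<Omega> \<and> bounded \<Omega> \<and>
     measure lebesgue \<Omega> \<le> M * r ^ DIM('a) \<and>
     C1alpha_boundary \<alpha> r L \<Omega> \<and>
     open D \<and> bounded D \<and> closure D \<subseteq> \<Omega> \<and>
     connected (\<Omega> - closure D) \<and>
     (\<forall>x\<in>D. \<forall>y\<in>frontier \<Omega>. dist x y \<ge> \<delta>) \<and>
     C1alpha_boundary \<alpha> r L D
     \<longrightarrow> (\<forall>P\<in>frontier D. \<exists>\<gamma>. path \<gamma> \<and> pathstart \<gamma> = P \<and> pathfinish \<gamma> \<in> frontier \<Omega> \<and>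
            (\<forall>t\<in>{0<..<1}. \<gamma> t \<in> \<Omega> - closure D) \<and>
            (\<forall>z\<in>path_image \<gamma>. dist z P \<le> c * infdist z D))"
proof -
  have "0 \<le> L" using \<open>L > 0\<close> by simp
  obtain Dm where "0 \<le> Dm" and diameter_le_Dm: "\<And>\<Omega> :: 'a set. open \<Omega> \<Longrightarrow> connected \<Omega> \<Longrightarrow>
      bounded \<Omega> \<Longrightarrow> measure lebesgue \<Omega> \<le> M * r ^ DIM('a) \<Longrightarrow> C1alpha_boundary \<alpha> r L \<Omega> \<Longrightarrow>
      diameter \<Omega> \<le> Dm"
    using C1alpha_boundary_diameter_bound[OF assms(1,2) \<open>0 \<le> L\<close>] by blast
  define \<rho> where "\<rho> = (3 + L) * (2 * L + 5) + 1"
  define \<epsilon> where "\<epsilon> = min r \<delta> / (4 * \<rho>)"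
  have "0 < \<rho>" using \<open>0 \<le> L\<close> by (simp add: \<rho>_def add_pos_nonneg)
  then have "0 < \<epsilon>" and "\<rho> * \<epsilon> = min r \<delta> / 4" using assms(2,4) by (simp_all add: \<epsilon>_def)
  then have small: "(3 + L) * ((2 * L + 5) * \<epsilon>) + \<epsilon> \<le> min r \<delta> / 4"
    by (simp add: \<rho>_def algebra_simps)
  show ?thesis
  proof (intro exI[of _ "(1 + L) * (1 + 2 * Dm / \<epsilon>)"] conjI allI impI ballI)
    show "0 < (1 + L) * (1 + 2 * Dm / \<epsilon>)" using \<open>0 \<le> L\<close> \<open>0 \<le> Dm\<close> \<open>0 < \<epsilon>\<close> by (simp add: add_pos_nonneg)
    fix \<Omega> D :: "'a set" and P
    assume H: "open \<Omega> \<and> connected \<Omega> \<and> bounded \<Omega> \<and> measure lebesgue \<Omega> \<le> M * r ^ DIM('a) \<and>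
      C1alpha_boundary \<alpha> r L \<Omega> \<and> open D \<and> bounded D \<and> closure D \<subseteq> \<Omega> \<and>
      connected (\<Omega> - closure D) \<and> (\<forall>x\<in>D. \<forall>y\<in>frontier \<Omega>. dist x y \<ge> \<delta>) \<and>
      C1alpha_boundary \<alpha> r L D"
      and "P \<in> frontier D"
    have "diameter \<Omega> \<le> Dm" using diameter_le_Dm H by blast
    then have "(1 + L) * (1 + 2 * diameter \<Omega> / \<epsilon>) \<le> (1 + L) * (1 + 2 * Dm / \<epsilon>)"
      using \<open>0 \<le> L\<close> \<open>0 < \<epsilon>\<close> by (intro mult_left_mono add_left_mono divide_right_mono) auto
    then show "\<exists>\<gamma>. path \<gamma> \<and> pathstart \<gamma> = P \<and> pathfinish \<gamma> \<in> frontier \<Omega> \<and>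
        (\<forall>t\<in>{0<..<1}. \<gamma> t \<in> \<Omega> - closure D) \<and>
        (\<forall>z\<in>path_image \<gamma>. dist z P \<le> (1 + L) * (1 + 2 * Dm / \<epsilon>) * infdist z D)"
      using C1alpha_inclusion_non_tangential_path[OF assms(1) \<open>0 \<le> L\<close> \<open>0 < \<epsilon>\<close> small]
        H \<open>P \<in> frontier D\<close> by blast
  qed
qed

end
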